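(* Let $M$ be a free $\mathbb{T}$-module with a finite $\mathbb{T}$-basis, $V$ its associated complex vector space, and $(\cdot,\cdot)$ a bicomplex scalar product on $M$ which is hyperbolic positive and closed on $V$. Then $V$ is a closed subset of the metric space $(M,d)$, where $d(\widehat X,\widehat Y)=\|\widehat X-\widehat Y\|$.
   Context: Bicomplex numbers: $\mathbb{T}=\{z_1+z_2\mathbf{i_2}: z_1,z_2\in\mathbb{C}(\mathbf{i_1})\}$, $\mathbb{C}(\mathbf{i_1})=\{x+y\mathbf{i_1}: x,y\in\mathbb{R}\}$, $\mathbf{i_1}^2=\mathbf{i_2}^2=-1$, $\mathbf{i_1}\mathbf{i_2}=\mathbf{i_2}\mathbf{i_1}=\mathbf{j}$, $\mathbf{j}^2=1$ (commutative). Hyperbolic numbers $\mathbb{D}=\{x+y\mathbf{j}:x,y\in\mathbb{R}\}$. Idempotents $\mathbf{e_1}=(1+\mathbf{j})/2$, $\mathbf{e_2}=(1-\mathbf{j})/2$. Conjugation: $(z_1+z_2\mathbf{i_2})^{\dagger_3}=\overline{z_1}-\overline{z_2}\mathbf{i_2}$. $\mathbb{D}^+=\{a\mathbf{e_1}+b\mathbf{e_2}: a,b\ge 0\}$. $M$ has $\mathbb{T}$-basis $\{\widehat m_1,\dots,\widehat m_n\}$, $V=\{\sum x_l\widehat m_l: x_l\in\mathbb{C}(\mathbf{i_1})\}$; for $\widehat X=\sum x_l\widehat m_l$ with $x_l=x_{1l}\mathbf{e_1}+x_{2l}\mathbf{e_2}$, $x_{kl}\in\mathbb{C}(\mathbf{i_1})$,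 put $\widehat X_{\mathbf{e_k}}=\sum_l x_{kl}\widehat m_l\in V$. A bicomplex scalar product is a map $(\cdot,\cdot):M\times M\to\mathbb{T}$ with: $(\widehat X,\widehat Y_1+\widehat Y_2)=(\widehat X,\widehat Y_1)+(\widehat X,\widehat Y_2)$; $(\widehat X,\alpha\widehat Y)=\alpha(\widehat X,\widehat Y)$ for $\alpha\in\mathbb{T}$; $(\widehat X,\widehat Y)=(\widehat Y,\widehat X)^{\dagger_3}$; $(\widehat X,\widehat X)=0\iff\widehat X=0$. Hyperbolic positive: $(\widehat X,\widehat X)\in\mathbb{D}^+$ for all $\widehat X$. Closed on $V$: $(\widehat X,\widehat Y)\in\mathbb{C}(\mathbf{i_1})$ for $\widehat X,\widehat Y\in V$. For $\widehat Z\in V$, $\|\widehat Z\|=(\widehat Z,\widehat Z)^{1/2}$; for $\widehat X\in M$, $\|\widehat X\|:=\big((\|\widehat X_{\mathbf{e_1}}\|^2+\|\widehat X_{\mathbf{e_2}}\|^2)/2\big)^{1/2}$; $d$ is a metric on $M$. *)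

theory Defs
  imports "HOL-Analysis.Analysis"
begin

text \<open>A bicomplex number z1 + z2 i2 with z1, z2 in C(i1) is represented by the pair
  of its two C(i1)-components; C(i1) is Isabelle's type complex (i1 = ii).\<close>

datatype bicomplex = BC (bc1: complex) (bc2: complex)

definition bc_zero :: bicomplex where "bc_zero = BC 0 0"

definition bc_add :: "bicomplex \<Rightarrow> bicomplex \<Rightarrow> bicomplex" where
  "bc_add x y = BC (bc1 x + bc1 y) (bc2 x + bc2 y)"

definition bc_mult :: "bicomplex \<Rightarrow> bicomplex \<Rightarrow> bicomplex" where
  "bc_mult x y = BC (bc1 x * bc1 y - bc2 x * bc2 y) (bc1 x * bc2 y + bc2 x * bc1 y)"

definition bc_of_complex :: "complex \<Rightarrow> bicomplex" where
  "bc_of_complex z = BC z 0"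

definition in_Ci1 :: "bicomplex \<Rightarrow> bool" where
  "in_Ci1 x \<longleftrightarrow> bc2 x = 0"

definition bc_i1 :: bicomplex where "bc_i1 = BC \<i> 0"
definition bc_i2 :: bicomplex where "bc_i2 = BC 0 1"
definition bc_j :: bicomplex where "bc_j = bc_mult bc_i1 bc_i2"

definition bc_e1 :: bicomplex where "bc_e1 = bc_mult (bc_of_complex (1/2)) (bc_add (BC 1 0) bc_j)"
definition bc_e2 :: bicomplex where
  "bc_e2 = bc_mult (bc_of_complex (1/2)) (bc_add (BC 1 0) (bc_mult (BC (-1) 0) bc_j))"

definition bc_conj3 :: "bicomplex \<Rightarrow> bicomplex" where
  "bc_conj3 x = BC (cnj (bc1 x)) (- cnj (bc2 x))"

text \<open>Idempotent components: x = (idem1 x) e1 + (idem2 x) e2 with idem_k x in C(i1)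
  (the representation is unique; see lemma below).\<close>
definition bc_idem1 :: "bicomplex \<Rightarrow> complex" where
  "bc_idem1 x = bc1 x - \<i> * bc2 x"
definition bc_idem2 :: "bicomplex \<Rightarrow> complex" where
  "bc_idem2 x = bc1 x + \<i> * bc2 x"

lemma bc_idem_decomp:
  "x = bc_add (bc_mult (bc_of_complex (bc_idem1 x)) bc_e1) (bc_mult (bc_of_complex (bc_idem2 x)) bc_e2)"
  by (cases x) (simp add: bc_add_def bc_mult_def bc_of_complex_def bc_e1_def bc_e2_def bc_j_def
      bc_i1_def bc_i2_def bc_idem1_def bc_idem2_def field_simps complex_eq_iff)

definition bc_Dplus :: "bicomplex set" where
  "bc_Dplus = {bc_add (bc_mult (bc_of_complex (complex_of_real a)) bc_e1)
                      (bc_mult (bc_of_complex (complex_of_real b)) bc_e2) | a b. a \<ge> 0 \<and> b \<ge> 0}"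

text \<open>M is identified with T^n via coordinates w.r.t. its T-basis m_1..m_n: an element
  is the function 'n \<Rightarrow> bicomplex of its coordinates ('n a finite index type).\<close>

type_synonym 'n bcmod = "'n \<Rightarrow> bicomplex"

definition M_zero :: "'n bcmod" where "M_zero = (\<lambda>l. bc_zero)"
definition M_add :: "'n bcmod \<Rightarrow> 'n bcmod \<Rightarrow> 'n bcmod" where
  "M_add X Y = (\<lambda>l. bc_add (X l) (Y l))"
definition M_smult :: "bicomplex \<Rightarrow> 'n bcmod \<Rightarrow> 'n bcmod" where
  "M_smult a X = (\<lambda>l. bc_mult a (X l))"
definition M_sub :: "'n bcmod \<Rightarrow> 'n bcmod \<Rightarrow> 'n bcmod" where
  "M_sub X Y = M_add X (M_smult (BC (-1) 0) Y)"

definition V_space :: "'n bcmod set" where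
  "V_space = {X. \<forall>l. in_Ci1 (X l)}"

definition M_e1 :: "'n bcmod \<Rightarrow> 'n bcmod" where
  "M_e1 X = (\<lambda>l. bc_of_complex (bc_idem1 (X l)))"
definition M_e2 :: "'n bcmod \<Rightarrow> 'n bcmod" where
  "M_e2 X = (\<lambda>l. bc_of_complex (bc_idem2 (X l)))"

definition bicomplex_scalar_product :: "('n bcmod \<Rightarrow> 'n bcmod \<Rightarrow> bicomplex) \<Rightarrow> bool" where
  "bicomplex_scalar_product sp \<longleftrightarrow>
     (\<forall>X Y1 Y2. sp X (M_add Y1 Y2) = bc_add (sp X Y1) (sp X Y2)) \<and>
     (\<forall>X a Y. sp X (M_smult a Y) = bc_mult a (sp X Y)) \<and>
     (\<forall>X Y. sp X Y = bc_conj3 (sp Y X)) \<and>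
     (\<forall>X. sp X X = bc_zero \<longleftrightarrow> X = M_zero)"

definition hyperbolic_positive :: "('n bcmod \<Rightarrow> 'n bcmod \<Rightarrow> bicomplex) \<Rightarrow> bool" where
  "hyperbolic_positive sp \<longleftrightarrow> (\<forall>X. sp X X \<in> bc_Dplus)"

definition closed_on_V :: "('n bcmod \<Rightarrow> 'n bcmod \<Rightarrow> bicomplex) \<Rightarrow> bool" where
  "closed_on_V sp \<longleftrightarrow> (\<forall>X\<in>V_space. \<forall>Y\<in>V_space. in_Ci1 (sp X Y))"

text \<open>For Z in V, (Z,Z) is a nonnegative real number (it lies in C(i1) \<inter> D+), so its
  square root is the real square root of its real part.\<close>
definition V_norm :: "('n bcmod \<Rightarrow> 'n bcmod \<Rightarrow> bicomplex) \<Rightarrow> 'n bcmod \<Rightarrow> real" where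
  "V_norm sp Z = sqrt (Re (bc1 (sp Z Z)))"

definition M_norm :: "('n bcmod \<Rightarrow> 'n bcmod \<Rightarrow> bicomplex) \<Rightarrow> 'n bcmod \<Rightarrow> real" where
  "M_norm sp X = sqrt (((V_norm sp (M_e1 X))\<^sup>2 + (V_norm sp (M_e2 X))\<^sup>2) / 2)"

definition M_dist :: "('n bcmod \<Rightarrow> 'n bcmod \<Rightarrow> bicomplex) \<Rightarrow> 'n bcmod \<Rightarrow> 'n bcmod \<Rightarrow> real" where
  "M_dist sp X Y = M_norm sp (M_sub X Y)"

end

theory Submission
  imports Defs
begin

text \<open>The real part of the first component of (X, Y) is a positive semidefinite symmetric
  real bilinear form on M, so Cauchy-Schwarz makes the norm on V subadditive, and the norm
  on M, a quadratic mean of the norms of the idempotent components, inherits this.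
  Closedness on V forces (Z, Z) to be a nonnegative real for Z in V, which makes the norm
  definite on V and hence d a metric. Finally X lies in V iff its components X_e1 and X_e2
  coincide, and for Y in V the triangle inequality gives
  norm (X_e1 - X_e2) \<le> norm (X_e1 - Y_e1) + norm (Y_e2 - X_e2) \<le> 2 d(X, Y),
  so a point outside V has a whole ball around it outside V.\<close>

lemma bicomplex_scalar_productD:
  assumes "bicomplex_scalar_product sp"
  shows "sp X (M_add Y1 Y2) = bc_add (sp X Y1) (sp X Y2)"
    and "sp X (M_smult a Y) = bc_mult a (sp X Y)"
    and "sp X Y = bc_conj3 (sp Y X)"
    and "sp X X = bc_zero \<longleftrightarrow> X = M_zero"
  using assms unfolding bicomplex_scalar_product_def by blast+

(* a e1 + b e2 = (a + b)/2 + ((a - b)/2) j, and j = i1 i2 is stored as BC 0 i1. *)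
lemma bc_Dplus_components:
  assumes "z \<in> bc_Dplus"
  obtains a b where "a \<ge> 0" "b \<ge> 0"
    "z = BC (complex_of_real ((a + b) / 2)) (\<i> * complex_of_real ((a - b) / 2))"
  using assms
  by (auto simp: bc_Dplus_def bc_add_def bc_mult_def bc_of_complex_def bc_e1_def bc_e2_def
      bc_j_def bc_i1_def bc_i2_def complex_eq_iff)

lemma quadratic_nonneg_imp_discriminant_le:
  fixes a b c :: real
  assumes nonneg: "\<And>t. 0 \<le> a + 2 * t * b + t\<^sup>2 * c" and "c \<ge> 0"
  shows "b\<^sup>2 \<le> a * c"
proof (cases "c = 0")
  case True
  have "b = 0"
  proof (rule ccontr)
    assume "b \<noteq> 0"
    then have "a + 2 * (-(a + 1) / (2 * b)) * b + (-(a + 1) / (2 * b))\<^sup>2 * c = -1"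
      using True by (simp add: field_simps)
    then show False using nonneg[of "-(a + 1) / (2 * b)"] by linarith
  qed
  with True show ?thesis by simp
next
  case False
  with \<open>c \<ge> 0\<close> have "c > 0" by simp
  have "0 \<le> a + 2 * (-b / c) * b + (-b / c)\<^sup>2 * c" by (rule nonneg)
  also have "\<dots> = a - b\<^sup>2 / c" using \<open>c > 0\<close> by (simp add: power2_eq_square field_simps)
  finally show ?thesis using \<open>c > 0\<close> by (simp add: field_simps)
qed

lemma add_le_2_sqrt_mean_square:
  fixes a b :: real
  shows "a + b \<le> 2 * sqrt ((a\<^sup>2 + b\<^sup>2) / 2)"
proof -
  have "(a + b)\<^sup>2 \<le> 4 * ((a\<^sup>2 + b\<^sup>2) / 2)"
    using sum_squares_ge_zero[of "a - b" 0] by (simp add: power2_eq_square algebra_simps)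
  then have "a + b \<le> sqrt 4 * sqrt ((a\<^sup>2 + b\<^sup>2) / 2)"
    by (metis real_le_rsqrt real_sqrt_mult)
  also have "sqrt 4 = (2::real)" by (rule real_sqrt_unique) simp_all
  finally show ?thesis .
qed

lemma M_smult_one: "M_smult (BC 1 0) X = X"
  by (simp add: M_smult_def bc_mult_def)

lemma M_sub_split: "M_sub X Z = M_add (M_sub X Y) (M_sub Y Z)"
  by (rule ext) (simp add: M_sub_def M_add_def M_smult_def bc_add_def bc_mult_def bicomplex.expand)

lemma M_sub_swap: "M_sub Y X = M_smult (BC (of_real (-1)) 0) (M_sub X Y)"
  by (rule ext) (simp add: M_sub_def M_add_def M_smult_def bc_add_def bc_mult_def bicomplex.expand)

lemma M_sub_self: "M_sub X X = M_zero"
  by (rule ext) (simp add: M_sub_def M_add_def M_smult_def bc_add_def bc_mult_def M_zero_def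
      bc_zero_def bicomplex.expand)

lemma M_sub_eq_zeroD:
  assumes "M_sub X Y = M_zero"
  shows "X = Y"
proof (rule ext)
  fix l
  have "M_sub X Y l = M_zero l" using assms by simp
  then show "X l = Y l"
    by (simp add: M_sub_def M_add_def M_smult_def bc_add_def bc_mult_def M_zero_def bc_zero_def
        bicomplex.expand)
qed

lemma M_sub_in_V_space: "X \<in> V_space \<Longrightarrow> Y \<in> V_space \<Longrightarrow> M_sub X Y \<in> V_space"
  by (simp add: V_space_def in_Ci1_def M_sub_def M_add_def M_smult_def bc_add_def bc_mult_def)

lemma M_e1_in_V_space: "M_e1 X \<in> V_space"
  and M_e2_in_V_space: "M_e2 X \<in> V_space"
  by (simp_all add: M_e1_def M_e2_def V_space_def in_Ci1_def bc_of_complex_def)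

lemma M_e1_add: "M_e1 (M_add X Y) = M_add (M_e1 X) (M_e1 Y)"
  and M_e2_add: "M_e2 (M_add X Y) = M_add (M_e2 X) (M_e2 Y)"
  by (rule ext, simp add: M_e1_def M_e2_def M_add_def bc_add_def bc_of_complex_def
      bc_idem1_def bc_idem2_def bicomplex.expand algebra_simps)+

lemma M_e1_sub: "M_e1 (M_sub X Y) = M_sub (M_e1 X) (M_e1 Y)"
  and M_e2_sub: "M_e2 (M_sub X Y) = M_sub (M_e2 X) (M_e2 Y)"
  by (rule ext, simp add: M_e1_def M_e2_def M_sub_def M_add_def M_smult_def bc_add_def
      bc_mult_def bc_of_complex_def bc_idem1_def bc_idem2_def bicomplex.expand algebra_simps)+

lemma M_e1_zero: "M_e1 M_zero = M_zero"
  and M_e2_zero: "M_e2 M_zero = M_zero"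
  by (auto simp: M_e1_def M_e2_def M_zero_def bc_zero_def bc_of_complex_def bc_idem1_def
      bc_idem2_def)

lemma M_idem_components_zeroD:
  assumes "M_e1 X = M_zero" "M_e2 X = M_zero"
  shows "X = M_zero"
proof (rule ext)
  fix l
  have "bc_idem1 (X l) = 0" "bc_idem2 (X l) = 0"
    using fun_cong[OF assms(1), of l] fun_cong[OF assms(2), of l]
    by (auto simp: M_e1_def M_e2_def M_zero_def bc_zero_def bc_of_complex_def)
  then have "bc1 (X l) = 0" "bc2 (X l) = 0"
    by (auto simp: bc_idem1_def bc_idem2_def complex_eq_iff)
  then show "X l = M_zero l"
    by (simp add: M_zero_def bc_zero_def bicomplex.expand)
qed

lemma V_space_iff_M_e1_eq_M_e2: "X \<in> V_space \<longleftrightarrow> M_e1 X = M_e2 X"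
proof
  assume "M_e1 X = M_e2 X"
  then have "bc_idem1 (X l) = bc_idem2 (X l)" for l
    by (metis M_e1_def M_e2_def bc_of_complex_def bicomplex.inject)
  then show "X \<in> V_space"
    by (simp add: V_space_def in_Ci1_def bc_idem1_def bc_idem2_def)
qed (auto simp: V_space_def in_Ci1_def M_e1_def M_e2_def bc_idem1_def bc_idem2_def)

locale hyperbolic_scalar_product =
  fixes sp :: "'n bcmod \<Rightarrow> 'n bcmod \<Rightarrow> bicomplex"
  assumes scalar_product: "bicomplex_scalar_product sp"
    and positive: "hyperbolic_positive sp"
begin

definition re_inner :: "'n bcmod \<Rightarrow> 'n bcmod \<Rightarrow> real" where
  "re_inner X Y = Re (bc1 (sp X Y))"

lemma re_inner_commute: "re_inner X Y = re_inner Y X"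
  using bicomplex_scalar_productD(3)[OF scalar_product, of X Y]
  by (simp add: re_inner_def bc_conj3_def)

lemma re_inner_add_right: "re_inner X (M_add Y Z) = re_inner X Y + re_inner X Z"
  using bicomplex_scalar_productD(1)[OF scalar_product]
  by (simp add: re_inner_def bc_add_def)

lemma re_inner_add_left: "re_inner (M_add Y Z) X = re_inner Y X + re_inner Z X"
  by (simp add: re_inner_commute[of _ X] re_inner_add_right)

lemma re_inner_scale_right: "re_inner X (M_smult (BC (of_real t) 0) Y) = t * re_inner X Y"
  using bicomplex_scalar_productD(2)[OF scalar_product]
  by (simp add: re_inner_def bc_mult_def)

lemma re_inner_scale_left: "re_inner (M_smult (BC (of_real t) 0) Y) X = t * re_inner Y X"
  by (simp add: re_inner_commute[of _ X] re_inner_scale_right)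

lemma re_inner_self_nonneg: "re_inner X X \<ge> 0"
proof -
  have "sp X X \<in> bc_Dplus" using positive by (simp add: hyperbolic_positive_def)
  then obtain a b where "a \<ge> 0" "b \<ge> 0"
    "sp X X = BC (complex_of_real ((a + b) / 2)) (\<i> * complex_of_real ((a - b) / 2))"
    by (rule bc_Dplus_components)
  then show ?thesis by (simp add: re_inner_def)
qed

lemma re_inner_add_scaled_self:
  "re_inner (M_add X (M_smult (BC (of_real t) 0) Y)) (M_add X (M_smult (BC (of_real t) 0) Y))
     = re_inner X X + 2 * t * re_inner X Y + t\<^sup>2 * re_inner Y Y"
  by (simp add: re_inner_add_left re_inner_add_right re_inner_scale_left re_inner_scale_right
      re_inner_commute[of Y X] power2_eq_square algebra_simps)

lemma re_inner_Cauchy_Schwarz: "(re_inner X Y)\<^sup>2 \<le> re_inner X X * re_inner Y Y"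
proof (rule quadratic_nonneg_imp_discriminant_le)
  show "0 \<le> re_inner X X + 2 * t * re_inner X Y + t\<^sup>2 * re_inner Y Y" for t
    using re_inner_self_nonneg[of "M_add X (M_smult (BC (of_real t) 0) Y)"]
    by (simp only: re_inner_add_scaled_self)
qed (rule re_inner_self_nonneg)

lemma V_norm_eq_sqrt_re_inner: "V_norm sp X = sqrt (re_inner X X)"
  by (simp add: V_norm_def re_inner_def)

lemma V_norm_nonneg: "V_norm sp X \<ge> 0"
  by (simp add: V_norm_eq_sqrt_re_inner re_inner_self_nonneg)

lemma V_norm_zero: "V_norm sp M_zero = 0"
  using bicomplex_scalar_productD(4)[OF scalar_product, of M_zero]
  by (simp add: V_norm_def bc_zero_def)

lemma V_norm_minus_commute: "V_norm sp (M_sub Y X) = V_norm sp (M_sub X Y)"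
  using re_inner_scale_left[of "-1"] re_inner_scale_right[of _ "-1"]
  by (simp add: V_norm_eq_sqrt_re_inner M_sub_swap[of Y X])

lemma V_norm_triangle: "V_norm sp (M_add X Y) \<le> V_norm sp X + V_norm sp Y"
proof -
  define a b c where "a = re_inner X X" and "b = re_inner X Y" and "c = re_inner Y Y"
  have "a \<ge> 0" "c \<ge> 0" unfolding a_def c_def by (simp_all add: re_inner_self_nonneg)
  have "b \<le> sqrt (b\<^sup>2)" by simp
  also have "\<dots> \<le> sqrt (a * c)"
    unfolding a_def b_def c_def by (rule real_sqrt_le_mono, rule re_inner_Cauchy_Schwarz)
  finally have "a + 2 * b + c \<le> (sqrt a + sqrt c)\<^sup>2"
    using \<open>a \<ge> 0\<close> \<open>c \<ge> 0\<close> by (simp add: power2_eq_square real_sqrt_mult algebra_simps)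
  then have "sqrt (a + 2 * b + c) \<le> sqrt a + sqrt c"
    using real_sqrt_le_mono \<open>a \<ge> 0\<close> \<open>c \<ge> 0\<close> by fastforce
  moreover have "re_inner (M_add X Y) (M_add X Y) = a + 2 * b + c"
    using re_inner_add_scaled_self[of X 1 Y] by (simp add: M_smult_one a_def b_def c_def)
  ultimately show ?thesis by (simp add: V_norm_eq_sqrt_re_inner a_def c_def)
qed

lemma M_norm_triangle: "M_norm sp (M_add X Y) \<le> M_norm sp X + M_norm sp Y"
proof -
  define a1 a2 b1 b2 where "a1 = V_norm sp (M_e1 X)" and "a2 = V_norm sp (M_e2 X)"
    and "b1 = V_norm sp (M_e1 Y)" and "b2 = V_norm sp (M_e2 Y)"
  have "V_norm sp (M_e1 (M_add X Y)) \<le> a1 + b1" "V_norm sp (M_e2 (M_add X Y)) \<le> a2 + b2"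
    unfolding a1_def a2_def b1_def b2_def M_e1_add M_e2_add by (rule V_norm_triangle)+
  then have "M_norm sp (M_add X Y) \<le> sqrt (((a1 + b1)\<^sup>2 + (a2 + b2)\<^sup>2) / 2)"
    unfolding M_norm_def
    by (intro real_sqrt_le_mono divide_right_mono add_mono power_mono) (simp_all add: V_norm_nonneg)
  also have "\<dots> \<le> (sqrt (a1\<^sup>2 + a2\<^sup>2) + sqrt (b1\<^sup>2 + b2\<^sup>2)) / sqrt 2"
    unfolding real_sqrt_divide
    by (intro divide_right_mono real_sqrt_sum_squares_triangle_ineq) simp
  also have "\<dots> = sqrt ((a1\<^sup>2 + a2\<^sup>2) / 2) + sqrt ((b1\<^sup>2 + b2\<^sup>2) / 2)"
    unfolding real_sqrt_divide by (rule add_divide_distrib)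
  finally show ?thesis unfolding M_norm_def a1_def a2_def b1_def b2_def .
qed

lemma M_norm_minus_commute: "M_norm sp (M_sub Y X) = M_norm sp (M_sub X Y)"
  unfolding M_norm_def M_e1_sub M_e2_sub
    V_norm_minus_commute[of "M_e1 X"] V_norm_minus_commute[of "M_e2 X"] ..

lemma V_norm_idem_diff_le_2_M_dist:
  assumes "Y \<in> V_space"
  shows "V_norm sp (M_sub (M_e1 X) (M_e2 X)) \<le> 2 * M_dist sp X Y"
proof -
  have "M_e1 Y = M_e2 Y" using assms V_space_iff_M_e1_eq_M_e2 by blast
  have "V_norm sp (M_sub (M_e1 X) (M_e2 X))
      \<le> V_norm sp (M_sub (M_e1 X) (M_e1 Y)) + V_norm sp (M_sub (M_e1 Y) (M_e2 X))"
    unfolding M_sub_split[of "M_e1 X" "M_e2 X" "M_e1 Y"] by (rule V_norm_triangle)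
  also have "\<dots> = V_norm sp (M_e1 (M_sub X Y)) + V_norm sp (M_e2 (M_sub X Y))"
    by (simp add: \<open>M_e1 Y = M_e2 Y\<close> M_e1_sub M_e2_sub V_norm_minus_commute[of "M_e2 X"])
  also have "\<dots> \<le> 2 * M_dist sp X Y"
    unfolding M_dist_def M_norm_def by (rule add_le_2_sqrt_mean_square)
  finally show ?thesis .
qed

end

locale V_closed_hyperbolic_scalar_product = hyperbolic_scalar_product sp
  for sp :: "'n bcmod \<Rightarrow> 'n bcmod \<Rightarrow> bicomplex" +
  assumes closed_V: "closed_on_V sp"
begin

lemma V_norm_eq_zeroD:
  assumes "Z \<in> V_space" "V_norm sp Z = 0"
  shows "Z = M_zero"
proof -
  have "sp Z Z \<in> bc_Dplus" using positive by (simp add: hyperbolic_positive_def)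
  then obtain a b where "a \<ge> 0" "b \<ge> 0"
    "sp Z Z = BC (complex_of_real ((a + b) / 2)) (\<i> * complex_of_real ((a - b) / 2))"
    by (rule bc_Dplus_components)
  moreover have "in_Ci1 (sp Z Z)" using closed_V assms(1) by (simp add: closed_on_V_def)
  moreover have "Re (bc1 (sp Z Z)) = 0"
    using assms(2) re_inner_self_nonneg[of Z] by (simp add: V_norm_eq_sqrt_re_inner re_inner_def)
  ultimately have "sp Z Z = bc_zero" by (simp add: in_Ci1_def complex_eq_iff bc_zero_def)
  then show ?thesis using bicomplex_scalar_productD(4)[OF scalar_product] by blast
qed

lemma M_norm_eq_zeroD:
  assumes "M_norm sp X = 0"
  shows "X = M_zero"
proof -
  have "(V_norm sp (M_e1 X))\<^sup>2 + (V_norm sp (M_e2 X))\<^sup>2 = 0"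
    using assms by (simp add: M_norm_def)
  then have "V_norm sp (M_e1 X) = 0" "V_norm sp (M_e2 X) = 0"
    by (simp_all add: sum_squares_eq_zero_iff)
  then have "M_e1 X = M_zero" "M_e2 X = M_zero"
    by (simp_all add: V_norm_eq_zeroD M_e1_in_V_space M_e2_in_V_space)
  then show ?thesis by (rule M_idem_components_zeroD)
qed

lemma Metric_space_M_dist: "Metric_space UNIV (M_dist sp)"
proof
  fix X Y Z :: "'n bcmod"
  show "0 \<le> M_dist sp X Y" by (simp add: M_dist_def M_norm_def)
  show "M_dist sp X Y = M_dist sp Y X"
    unfolding M_dist_def by (rule M_norm_minus_commute)
  show "M_dist sp X Z \<le> M_dist sp X Y + M_dist sp Y Z"
    unfolding M_dist_def M_sub_split[of X Z Y] by (rule M_norm_triangle)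
  show "M_dist sp X Y = 0 \<longleftrightarrow> X = Y"
  proof
    assume "M_dist sp X Y = 0"
    then show "X = Y" unfolding M_dist_def by (rule M_sub_eq_zeroD[OF M_norm_eq_zeroD])
  qed (simp add: M_dist_def M_norm_def M_sub_self M_e1_zero M_e2_zero V_norm_zero)
qed

lemma closedin_V_space: "closedin (Metric_space.mtopology UNIV (M_dist sp)) V_space"
proof -
  interpret Metric_space UNIV "M_dist sp" by (rule Metric_space_M_dist)
  have "\<exists>r>0. disjnt V_space (mball X r)" if "X \<notin> V_space" for X :: "'n bcmod"
  proof -
    let ?r = "V_norm sp (M_sub (M_e1 X) (M_e2 X))"
    have "M_sub (M_e1 X) (M_e2 X) \<noteq> M_zero"
      using that M_sub_eq_zeroD V_space_iff_M_e1_eq_M_e2 by blast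
    then have "?r > 0"
      using V_norm_eq_zeroD[OF M_sub_in_V_space[OF M_e1_in_V_space M_e2_in_V_space]] V_norm_nonneg
      by (metis order_le_less)
    moreover have "Y \<notin> mball X (?r / 2)" if "Y \<in> V_space" for Y
      using V_norm_idem_diff_le_2_M_dist[OF that, of X] by simp
    then have "disjnt V_space (mball X (?r / 2))" by (auto simp: disjnt_iff)
    ultimately show ?thesis by (intro exI[of _ "?r / 2"]) simp
  qed
  then show ?thesis by (simp add: closedin_metric)
qed

end

theorem mainTheorem14:
  fixes sp :: "('n::finite \<Rightarrow> bicomplex) \<Rightarrow> ('n \<Rightarrow> bicomplex) \<Rightarrow> bicomplex"
  assumes "bicomplex_scalar_product sp"
    and "hyperbolic_positive sp"
    and "closed_on_V sp"
  shows "Metric_space UNIV (M_dist sp) \<and>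
         closedin (Metric_space.mtopology UNIV (M_dist sp)) V_space"
proof -
  interpret V_closed_hyperbolic_scalar_product sp
    using assms by unfold_locales
  show ?thesis using Metric_space_M_dist closedin_V_space by blast
qed

end
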